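(* Let $G=(V,E,w)$ be a connected undirected graph with positive edge weights, let $v\in V$, and let $E_v$ be a set of node pairs $\{u,v\}$ with $u\neq v$ and $\{u,v\}\notin E$, each $e\in E_v$ having a given positive weight $w(e)$. For $S\subseteq E_v$ let $\mathcal{R}(S)$ denote the resistance distance of $v$ in the augmented graph $G(S)$. Then $\mathcal{R}$ is supermodular: for any sets $S\subseteq T\subseteq E_v$ and any edge $e\in E_v\setminus T$, $$\mathcal{R}(T)-\mathcal{R}(T\cup\{e\})\le \mathcal{R}(S)-\mathcal{R}(S\cup\{e\}).$$
   Context: For a connected weighted graph $H$ on node set $V$ with $|V|=n$, its Laplacian is $\mathbf{L}=\mathbf{D}-\mathbf{A}$, where $\mathbf{A}$ is the weighted adjacency matrix and $\mathbf{D}$ the diagonal matrix of weighted degrees; $\mathbf{L}^\dagger$ denotes its Moore–Penrose pseudoinverse. For nodes $a,b$ let $\mathbf{b}_{a,b}=\mathbf{e}_a-\mathbf{e}_b$. The resistance distance between $a$ and $b$ is $\mathcal{R}_{ab}=\mathbf{b}_{a,b}^\top\mathbf{L}^\dagger\mathbf{b}_{a,b}$, and the resistance distance of node $v$ is $\mathcal{R}_v=\sum_{u\in V}\mathcal{R}_{uv}$. For $S\subseteq E_v$, $G(S)=(V,E\cup S,w')$ is the graph obtained by adding the edges of $S$ with their given weights. *)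

theory Defs
  imports "HOL-Analysis.Analysis"
begin

text \<open>Undirected weighted graphs on a finite node type 'n. An edge is a two-element
set of nodes; E is the edge set and w assigns weights to (unordered) node pairs.\<close>

definition wadj :: "'n set set \<Rightarrow> ('n set \<Rightarrow> real) \<Rightarrow> 'n \<Rightarrow> 'n \<Rightarrow> real" where
  "wadj E w a b = (if {a, b} \<in> E then w {a, b} else 0)"

definition laplacian :: "'n::finite set set \<Rightarrow> ('n set \<Rightarrow> real) \<Rightarrow> real^'n^'n" where
  "laplacian E w = (\<chi> i j. (if i = j then (\<Sum>k\<in>UNIV. wadj E w i k) else 0) - wadj E w i j)"

definition is_mp_pinv :: "real^'n^'n \<Rightarrow> real^'n^'n \<Rightarrow> bool" where
  "is_mp_pinv A X \<longleftrightarrow> A ** X ** A = A \<and> X ** A ** X = X \<and>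
     transpose (A ** X) = A ** X \<and> transpose (X ** A) = X ** A"

definition mp_pinv :: "real^'n^'n \<Rightarrow> real^'n^'n" where
  "mp_pinv A = (THE X. is_mp_pinv A X)"

definition bvec :: "'n::finite \<Rightarrow> 'n \<Rightarrow> real^'n" where
  "bvec a b = axis a 1 - axis b 1"

definition resistance :: "'n::finite set set \<Rightarrow> ('n set \<Rightarrow> real) \<Rightarrow> 'n \<Rightarrow> 'n \<Rightarrow> real" where
  "resistance E w a b = bvec a b \<bullet> (mp_pinv (laplacian E w) *v bvec a b)"

definition node_resistance :: "'n::finite set set \<Rightarrow> ('n set \<Rightarrow> real) \<Rightarrow> 'n \<Rightarrow> real" where
  "node_resistance E w v = (\<Sum>u\<in>UNIV. resistance E w u v)"

definition connected_graph :: "'n set set \<Rightarrow> bool" where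
  "connected_graph E \<longleftrightarrow> (\<forall>a b. (a, b) \<in> {(x, y). {x, y} \<in> E}\<^sup>*)"

end

theory Submission
  imports Defs
begin

text \<open>Ground the Laplacian at v: replacing row and column v of L by those of the identity
  gives a matrix M that is invertible with an entrywise nonnegative inverse, by the discrete
  minimum principle on the connected graph. The pseudoinverse of L is the centred version of
  M\<inverse> with row and column v cleared, so the resistance distance of v is the sum of the
  diagonal entries of M\<inverse> away from v. Adding the edge {u, v} only adds its weight to
  the (u, u) entry of M. The resolvent identity A\<inverse> - B\<inverse> = B\<inverse> (B - A) A\<inverse>
  writes the second difference M\<inverse> - (M + P)\<inverse> - (M + Q)\<inverse> + (M + P + Q)\<inverse>
  for two such added edges as a sum of products of nonnegative matrices; adding the edges of
  T - S one at a time gives the general inequality.\<close>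

subsection \<open>Inverses, pseudoinverses and nonnegative matrices\<close>

lemma matrix_diff_ldistrib: "(A::'a::ring_1^'n^'m) ** (B - C) = A ** B - A ** C"
  by (simp add: matrix_matrix_mult_def vec_eq_iff sum_subtractf ring_distribs)

lemma matrix_diff_rdistrib: "((A::'a::ring_1^'n^'m) - B) ** C = A ** C - B ** C"
  by (simp add: matrix_matrix_mult_def vec_eq_iff sum_subtractf ring_distribs)

lemma transpose_diff: "transpose ((A::'a::ring_1^'n^'m) - B) = transpose A - transpose B"
  by (simp add: transpose_def vec_eq_iff)

lemma matrix_inv_right: "invertible A \<Longrightarrow> A ** matrix_inv A = mat 1"
  and matrix_inv_left: "invertible A \<Longrightarrow> matrix_inv A ** A = mat 1"
  unfolding invertible_def matrix_inv_def by (metis (mono_tags, lifting) someI_ex)+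

lemma matrix_inv_diff:
  fixes A B :: "'a::ring_1^'n^'n"
  assumes "invertible A" "invertible B"
  shows "matrix_inv A - matrix_inv B = matrix_inv B ** (B - A) ** matrix_inv A"
  using assms
  by (simp add: matrix_diff_ldistrib matrix_diff_rdistrib matrix_inv_left matrix_inv_right
      flip: matrix_mul_assoc)

lemma transpose_matrix_inv_symmetric:
  fixes M :: "'a::comm_ring_1^'n^'n"
  assumes "transpose M = M" "invertible M"
  shows "transpose (matrix_inv M) = matrix_inv M"
proof -
  have "transpose (matrix_inv M) ** M = mat 1"
    using assms matrix_transpose_mul[of M "matrix_inv M"] by (simp add: matrix_inv_right)
  then have "transpose (matrix_inv M) ** (M ** matrix_inv M) = matrix_inv M"
    by (simp add: matrix_mul_assoc)
  then show ?thesis using assms by (simp add: matrix_inv_right)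
qed

lemma is_mp_pinv_unique:
  assumes X: "is_mp_pinv A X" and Y: "is_mp_pinv A Y"
  shows "X = Y"
proof -
  have AXA: "A ** X ** A = A" and XAX: "X ** A ** X = X" and AX: "transpose (A ** X) = A ** X"
    and XA: "transpose (X ** A) = X ** A" using X by (auto simp: is_mp_pinv_def)
  have AYA: "A ** Y ** A = A" and YAY: "Y ** A ** Y = Y" and AY: "transpose (A ** Y) = A ** Y"
    and YA: "transpose (Y ** A) = Y ** A" using Y by (auto simp: is_mp_pinv_def)
  have AX_AY: "A ** X = A ** Y"
  proof -
    have "A ** X = transpose (A ** Y ** A ** X)" using AX AYA by simp
    also have "\<dots> = transpose (A ** X) ** transpose (A ** Y)"
      by (simp add: matrix_transpose_mul matrix_mul_assoc)
    also have "\<dots> = A ** Y" using AX AY AXA by (simp add: matrix_mul_assoc)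
    finally show ?thesis .
  qed
  have XA_YA: "X ** A = Y ** A"
  proof -
    have "X ** A = transpose (X ** (A ** Y ** A))" using XA AYA by simp
    also have "\<dots> = transpose (Y ** A) ** transpose (X ** A)"
      by (simp add: matrix_transpose_mul matrix_mul_assoc)
    also have "\<dots> = Y ** (A ** X ** A)" using XA YA by (simp add: matrix_mul_assoc)
    finally show ?thesis using AXA by simp
  qed
  have "X = X ** A ** X" using XAX by simp
  also have "\<dots> = Y ** A ** Y" using AX_AY XA_YA by (metis matrix_mul_assoc)
  finally show ?thesis using YAY by simp
qed

lemma mp_pinv_eqI: "is_mp_pinv A X \<Longrightarrow> mp_pinv A = X"
  unfolding mp_pinv_def using is_mp_pinv_unique by blast

lemma is_mp_pinv_symmetricI:
  assumes "transpose A = A" "transpose X = X" "transpose P = P"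
    and "A ** X = P" "P ** A = A" "P ** X = X"
  shows "is_mp_pinv A X"
proof -
  have "X ** A = P"
    using assms(1-4) by (metis matrix_transpose_mul)
  with assms show ?thesis
    by (simp add: is_mp_pinv_def flip: matrix_mul_assoc)
qed

lemma inner_mp_pinv_image:
  assumes "transpose A = A" and "is_mp_pinv A X" and "A *v z = b"
  shows "b \<bullet> (X *v b) = z \<bullet> b"
proof -
  have "b \<bullet> (X *v b) = (z v* A) \<bullet> (X *v (A *v z))"
    using assms(1,3) by (metis transpose_matrix_vector)
  also have "\<dots> = z \<bullet> ((A ** X ** A) *v z)"
    by (simp add: dot_lmul_matrix matrix_vector_mul_assoc matrix_mul_assoc)
  also have "\<dots> = z \<bullet> b"
    using assms(2,3) by (simp add: is_mp_pinv_def)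
  finally show ?thesis .
qed

definition nonneg_matrix :: "real^'n^'m \<Rightarrow> bool" where
  "nonneg_matrix A \<longleftrightarrow> (\<forall>i j. 0 \<le> A $ i $ j)"

lemma nonneg_matrix_add: "nonneg_matrix A \<Longrightarrow> nonneg_matrix B \<Longrightarrow> nonneg_matrix (A + B)"
  by (simp add: nonneg_matrix_def)

lemma nonneg_matrix_mult:
  "nonneg_matrix (A::real^'n::finite^'m) \<Longrightarrow> nonneg_matrix B \<Longrightarrow> nonneg_matrix (A ** B)"
  by (auto simp: nonneg_matrix_def matrix_matrix_mult_def intro!: sum_nonneg)

lemma nonneg_matrix_inv_second_difference:
  fixes M P Q :: "real^'n::finite^'n"
  assumes inv: "invertible M" "invertible (M + P)" "invertible (M + Q)" "invertible (M + P + Q)"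
    and nonneg_inv: "nonneg_matrix (matrix_inv M)" "nonneg_matrix (matrix_inv (M + P))"
      "nonneg_matrix (matrix_inv (M + Q))" "nonneg_matrix (matrix_inv (M + P + Q))"
    and nonneg: "nonneg_matrix P" "nonneg_matrix Q"
  shows "nonneg_matrix (matrix_inv M - matrix_inv (M + P) - matrix_inv (M + Q) + matrix_inv (M + P + Q))"
proof -
  let ?X = "matrix_inv M" and ?XP = "matrix_inv (M + P)" and ?XQ = "matrix_inv (M + Q)"
    and ?XPQ = "matrix_inv (M + P + Q)"
  have P0: "?X - ?XP = ?XP ** P ** ?X"
    using matrix_inv_diff[OF inv(1,2)] by simp
  have PQ: "?XQ - ?XPQ = ?XPQ ** P ** ?XQ"
    using matrix_inv_diff[OF inv(3,4)] by (simp add: algebra_simps)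
  have QP: "?XP - ?XPQ = ?XPQ ** Q ** ?XP"
    using matrix_inv_diff[OF inv(2,4)] by simp
  have Q0: "?X - ?XQ = ?XQ ** Q ** ?X"
    using matrix_inv_diff[OF inv(1,3)] by simp
  have "?X - ?XP - ?XQ + ?XPQ = (?X - ?XP) - (?XQ - ?XPQ)"
    by simp
  also have "\<dots> = (?XP - ?XPQ) ** P ** ?X + ?XPQ ** P ** (?X - ?XQ)"
    by (simp add: P0 PQ matrix_diff_ldistrib matrix_diff_rdistrib matrix_mul_assoc)
  also have "\<dots> = ?XPQ ** Q ** ?XP ** P ** ?X + ?XPQ ** P ** (?XQ ** Q ** ?X)"
    by (simp add: QP Q0)
  finally show ?thesis
    using nonneg_inv nonneg by (simp add: nonneg_matrix_add nonneg_matrix_mult)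
qed

subsection \<open>The Laplacian and the grounded Laplacian\<close>

lemma wadj_commute: "wadj E w a b = wadj E w b a"
  by (simp add: wadj_def insert_commute)

lemma transpose_laplacian: "transpose (laplacian E w) = laplacian E w"
  by (simp add: transpose_def laplacian_def vec_eq_iff wadj_commute)

lemma laplacian_mult_vec:
  "(laplacian E w *v x) $ i = (\<Sum>k\<in>UNIV. wadj E w i k * (x $ i - x $ k))"
proof -
  let ?d = "\<Sum>k\<in>UNIV. wadj E w i k"
  have "(laplacian E w *v x) $ i
      = (\<Sum>j\<in>UNIV. (if i = j then ?d else 0) * x $ j) - (\<Sum>j\<in>UNIV. wadj E w i j * x $ j)"
    by (simp add: matrix_vector_mult_def laplacian_def left_diff_distrib sum_subtractf)
  also have "(\<Sum>j\<in>UNIV. (if i = j then ?d else 0) * x $ j) = ?d * x $ i"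
    by (simp add: if_distrib if_distribR cong: if_cong)
  finally show ?thesis
    by (simp add: right_diff_distrib sum_subtractf sum_distrib_right)
qed

lemma sum_laplacian_mult_vec: "(\<Sum>i\<in>UNIV. (laplacian E w *v x) $ i) = 0"
proof -
  have "(\<Sum>i\<in>UNIV. \<Sum>k\<in>UNIV. wadj E w i k * x $ k) = (\<Sum>k\<in>UNIV. \<Sum>i\<in>UNIV. wadj E w k i * x $ k)"
    by (subst sum.swap) (simp add: wadj_commute)
  then show ?thesis
    by (simp add: laplacian_mult_vec right_diff_distrib sum_subtractf)
qed

lemma laplacian_minimum_spreads:
  assumes wpos: "\<forall>f\<in>E. w f > 0"
    and min: "\<forall>k. x $ a \<le> x $ k" and super: "0 \<le> (laplacian E w *v x) $ a"
    and edge: "{a, b} \<in> E"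
  shows "x $ b = x $ a"
proof -
  have terms_nonneg: "0 \<le> wadj E w a k * (x $ k - x $ a)" for k
    using wpos min by (auto simp: wadj_def less_imp_le)
  have "(\<Sum>k\<in>UNIV. wadj E w a k * (x $ k - x $ a)) \<le> 0"
    using super by (simp add: laplacian_mult_vec right_diff_distrib sum_subtractf)
  moreover have "0 \<le> (\<Sum>k\<in>UNIV. wadj E w a k * (x $ k - x $ a))"
    by (rule sum_nonneg) (rule terms_nonneg)
  ultimately have "(\<Sum>k\<in>UNIV. wadj E w a k * (x $ k - x $ a)) = 0"
    by linarith
  then have "wadj E w a b * (x $ b - x $ a) = 0"
    by (rule sum_nonneg_0[OF finite terms_nonneg]) simp
  then show ?thesis
    using wpos edge by (fastforce simp: wadj_def)
qed

lemma laplacian_minimum_principle: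
  assumes wpos: "\<forall>f\<in>E. w f > 0" and conn: "connected_graph E"
    and boundary: "0 \<le> x $ v" and super: "\<forall>a. a \<noteq> v \<longrightarrow> 0 \<le> (laplacian E w *v x) $ a"
  shows "0 \<le> x $ i"
proof (rule ccontr)
  assume "\<not> 0 \<le> x $ i"
  define m where "m = Min (range (\<lambda>k. x $ k))"
  have m_le: "m \<le> x $ k" for k
    unfolding m_def by (rule Min_le) auto
  have "m \<in> range (\<lambda>k. x $ k)"
    unfolding m_def by (rule Min_in) auto
  then obtain a where a: "x $ a = m" by auto
  have "m < 0" using m_le[of i] \<open>\<not> 0 \<le> x $ i\<close> by linarith
  have "(a, v) \<in> {(p, q). {p, q} \<in> E}\<^sup>*"
    using conn by (simp add: connected_graph_def)
  then have "x $ v = m"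
  proof (induction rule: rtrancl_induct)
    case base
    then show ?case by (fact a)
  next
    case (step b c)
    then have "b \<noteq> v" using \<open>m < 0\<close> boundary by auto
    then show ?case
      using laplacian_minimum_spreads[OF wpos, of x b c] step m_le super by auto
  qed
  then show False using \<open>m < 0\<close> boundary by simp
qed

text \<open>The grounded Laplacian \<open>L\<^sub>-\<^sub>v\<close> of the paper (L with row and column v removed),
  padded by the identity at v so that it stays a matrix over all of 'n.\<close>

definition grounded_laplacian :: "'n::finite set set \<Rightarrow> ('n set \<Rightarrow> real) \<Rightarrow> 'n \<Rightarrow> real^'n^'n" where
  "grounded_laplacian E w v =
     (\<chi> i j. if i = v \<or> j = v then (if i = j then 1 else 0) else laplacian E w $ i $ j)"

definition ground :: "'n::finite \<Rightarrow> real^'n \<Rightarrow> real^'n" where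
  "ground v x = (\<chi> k. if k = v then 0 else x $ k)"

lemma ground_same [simp]: "ground v x $ v = 0"
  and ground_other [simp]: "k \<noteq> v \<Longrightarrow> ground v x $ k = x $ k"
  by (simp_all add: ground_def)

lemma transpose_grounded_laplacian: "transpose (grounded_laplacian E w v) = grounded_laplacian E w v"
  using transpose_laplacian[of E w]
  by (auto simp: transpose_def grounded_laplacian_def vec_eq_iff)

lemma grounded_laplacian_mult_vec_same: "(grounded_laplacian E w v *v x) $ v = x $ v"
  by (simp add: matrix_vector_mult_def grounded_laplacian_def if_distrib[of "\<lambda>a. a * _"] cong: if_cong)

lemma grounded_laplacian_mult_vec_other:
  "i \<noteq> v \<Longrightarrow> (grounded_laplacian E w v *v x) $ i = (laplacian E w *v ground v x) $ i"
  unfolding matrix_vector_mult_def grounded_laplacian_def ground_def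
  by (auto intro!: sum.cong)

lemma grounded_laplacian_nonneg_preimage:
  assumes wpos: "\<forall>f\<in>E. w f > 0" and conn: "connected_graph E"
    and nonneg: "\<forall>k. 0 \<le> (grounded_laplacian E w v *v x) $ k"
  shows "0 \<le> x $ i"
proof (cases "i = v")
  case True
  then show ?thesis using nonneg grounded_laplacian_mult_vec_same by metis
next
  case False
  have "0 \<le> ground v x $ i"
  proof (rule laplacian_minimum_principle[OF wpos conn, of _ v])
    show "\<forall>a. a \<noteq> v \<longrightarrow> 0 \<le> (laplacian E w *v ground v x) $ a"
      using nonneg by (metis grounded_laplacian_mult_vec_other)
  qed simp
  then show ?thesis using False by simp
qed

lemma invertible_grounded_laplacian:
  assumes wpos: "\<forall>f\<in>E. w f > 0" and conn: "connected_graph E"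
  shows "invertible (grounded_laplacian E w v)"
proof -
  have "x = 0" if "grounded_laplacian E w v *v x = 0" for x
  proof -
    have "grounded_laplacian E w v *v (- x) = 0"
      using that by (simp flip: diff_0 add: matrix_vector_mult_diff_distrib)
    have "0 \<le> x $ i" for i
      by (rule grounded_laplacian_nonneg_preimage[OF wpos conn, of v]) (simp add: that)
    moreover have "0 \<le> (- x) $ i" for i
      by (rule grounded_laplacian_nonneg_preimage[OF wpos conn, of v]) (simp add: \<open>_ *v (- x) = 0\<close>)
    ultimately show ?thesis
      by (simp add: vec_eq_iff order_antisym)
  qed
  then obtain B where "B ** grounded_laplacian E w v = mat 1"
    using matrix_left_invertible_ker by blast
  then show ?thesis
    using invertible_left_inverse by blast
qed

lemma nonneg_matrix_inv_grounded_laplacian: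
  assumes wpos: "\<forall>f\<in>E. w f > 0" and conn: "connected_graph E"
  shows "nonneg_matrix (matrix_inv (grounded_laplacian E w v))"
  unfolding nonneg_matrix_def
proof (intro allI)
  fix i j
  let ?M = "grounded_laplacian E w v"
  have "?M *v (matrix_inv ?M *v axis j 1) = axis j 1"
    by (simp add: matrix_vector_mul_assoc matrix_inv_right invertible_grounded_laplacian[OF wpos conn])
  then have "0 \<le> (matrix_inv ?M *v axis j 1) $ i"
    by (intro grounded_laplacian_nonneg_preimage[OF wpos conn, of v]) (simp add: axis_def)
  then show "0 \<le> matrix_inv ?M $ i $ j"
    by (simp add: matrix_vector_mult_basis column_def)
qed

definition spoke_matrix :: "'n::finite \<Rightarrow> ('n set \<Rightarrow> real) \<Rightarrow> 'n set \<Rightarrow> real^'n^'n" where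
  "spoke_matrix v w e = (\<chi> i j. if i = j \<and> i \<noteq> v \<and> e = {i, v} then w e else 0)"

lemma grounded_laplacian_insert_spoke:
  assumes e: "e = {u, v}" and "u \<noteq> v" and "e \<notin> E"
  shows "grounded_laplacian (insert e E) w v = grounded_laplacian E w v + spoke_matrix v w e"
proof -
  have wadj_insert: "wadj (insert e E) w a b = wadj E w a b + (if {a, b} = e then w e else 0)" for a b
    using \<open>e \<notin> E\<close> by (auto simp: wadj_def)
  have hits_e: "{i, k} = e \<longleftrightarrow> i = u \<and> k = v" if "i \<noteq> v" for i k
    using that \<open>u \<noteq> v\<close> e by (auto simp: doubleton_eq_iff)
  have degree: "(\<Sum>k\<in>UNIV. wadj (insert e E) w i k) = (\<Sum>k\<in>UNIV. wadj E w i k) + (if i = u then w e else 0)"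
    if "i \<noteq> v" for i
    using that by (simp add: wadj_insert sum.distrib hits_e cong: if_cong)
  have "grounded_laplacian (insert e E) w v $ i $ j = (grounded_laplacian E w v + spoke_matrix v w e) $ i $ j"
    for i j
  proof (cases "i = v \<or> j = v")
    case True
    then show ?thesis by (auto simp: grounded_laplacian_def spoke_matrix_def)
  next
    case False
    then have "wadj (insert e E) w i j = wadj E w i j"
      using wadj_insert[of i j] hits_e[of i j] by simp
    moreover have "e = {i, v} \<longleftrightarrow> i = u"
      using False hits_e[of i v] by auto
    ultimately show ?thesis
      using False by (simp add: grounded_laplacian_def spoke_matrix_def laplacian_def degree)
  qed
  then show ?thesis by (simp add: vec_eq_iff)
qed

subsection \<open>Resistance through the grounded Laplacian\<close>

definition centering_matrix :: "real^'n::finite^'n" where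
  "centering_matrix = mat 1 - (1 / real CARD('n)) *\<^sub>R (\<chi> i j. 1)"

lemma transpose_centering_matrix:
  "transpose centering_matrix = (centering_matrix :: real^'n::finite^'n)"
proof -
  have "transpose (\<chi> i j. 1 :: real^'n^'n) = (\<chi> i j. 1)"
    by (simp add: transpose_def)
  then show ?thesis
    by (simp add: centering_matrix_def transpose_diff transpose_scalar)
qed

lemma centering_matrix_idem:
  "centering_matrix ** centering_matrix = (centering_matrix :: real^'n::finite^'n)"
proof -
  have ones_squared: "(\<chi> i j. 1 :: real^'n^'n) ** (\<chi> i j. 1) = real CARD('n) *\<^sub>R (\<chi> i j. 1)"
    by (simp add: matrix_matrix_mult_def vec_eq_iff)
  show ?thesis
    by (simp add: centering_matrix_def matrix_diff_ldistrib matrix_diff_rdistrib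
        matrix_scalar_ac ones_squared flip: scalar_matrix_assoc)
qed

lemma laplacian_mult_centering:
  fixes E :: "'n::finite set set"
  shows "laplacian E w ** centering_matrix = laplacian E w"
proof -
  have "(laplacian E w ** (\<chi> i j. 1 :: real^'n^'n)) $ i $ j = (laplacian E w *v (\<chi> k. 1)) $ i" for i j
    by (simp add: matrix_matrix_mult_def matrix_vector_mult_def)
  also have "(laplacian E w *v (\<chi> k. 1)) $ i = 0" for i
    by (simp add: laplacian_mult_vec)
  finally have "laplacian E w ** (\<chi> i j. 1 :: real^'n^'n) = 0"
    by (simp add: vec_eq_iff)
  then show ?thesis
    by (simp add: centering_matrix_def matrix_diff_ldistrib matrix_scalar_ac flip: scalar_matrix_assoc)
qed

lemma centering_mult_laplacian: "centering_matrix ** laplacian E w = laplacian E w"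
  using arg_cong[OF laplacian_mult_centering, of transpose]
  by (simp add: matrix_transpose_mul transpose_laplacian transpose_centering_matrix)

lemma laplacian_ground_inverse_column:
  assumes inv: "invertible (grounded_laplacian E w v)" and "j \<noteq> v"
  shows "laplacian E w *v ground v (matrix_inv (grounded_laplacian E w v) *v axis j 1) = bvec j v"
    (is "laplacian E w *v ?z = _")
proof -
  have "grounded_laplacian E w v *v (matrix_inv (grounded_laplacian E w v) *v axis j 1) = axis j 1"
    by (simp add: matrix_vector_mul_assoc matrix_inv_right[OF inv])
  then have off_v: "(laplacian E w *v ?z) $ i = axis j 1 $ i" if "i \<noteq> v" for i
    using grounded_laplacian_mult_vec_other[OF that] by metis
  have "0 = (laplacian E w *v ?z) $ v + (\<Sum>i\<in>-{v}. (laplacian E w *v ?z) $ i)"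
    using sum_laplacian_mult_vec[of E w ?z] by (simp add: sum.remove[of UNIV v] Compl_eq_Diff_UNIV)
  also have "(\<Sum>i\<in>-{v}. (laplacian E w *v ?z) $ i) = (\<Sum>i\<in>-{v}. axis j 1 $ i)"
    using off_v by (intro sum.cong) auto
  also have "\<dots> = 1"
    using \<open>j \<noteq> v\<close> by (simp add: axis_def)
  finally show ?thesis
    using off_v \<open>j \<noteq> v\<close> by (auto simp: vec_eq_iff bvec_def axis_def)
qed

definition zero_row_col :: "'n::finite \<Rightarrow> real^'n^'n \<Rightarrow> real^'n^'n" where
  "zero_row_col v N = (\<chi> i j. if i = v \<or> j = v then 0 else N $ i $ j)"

lemma laplacian_mult_zero_row_col:
  assumes inv: "invertible (grounded_laplacian E w v)"
  shows "laplacian E w ** zero_row_col v (matrix_inv (grounded_laplacian E w v))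
    = mat 1 - (\<chi> i j. if i = v then 1 else 0)"
proof -
  let ?N = "matrix_inv (grounded_laplacian E w v)"
  have "(laplacian E w ** zero_row_col v ?N) $ i $ j = (mat 1 - (\<chi> i j. if i = v then 1 else 0)) $ i $ j"
    for i j
  proof (cases "j = v")
    case True
    then show ?thesis
      by (simp add: matrix_matrix_mult_def zero_row_col_def mat_def)
  next
    case False
    have "column j (zero_row_col v ?N) = ground v (?N *v axis j 1)"
      using False by (simp add: zero_row_col_def column_def ground_def matrix_vector_mult_basis vec_eq_iff)
    then have "(laplacian E w ** zero_row_col v ?N) $ i $ j = bvec j v $ i"
      using laplacian_ground_inverse_column[OF inv False]
      by (simp add: matrix_matrix_mult_def matrix_vector_mult_def column_def vec_eq_iff)
    then show ?thesis
      using False by (simp add: bvec_def mat_def axis_def)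
  qed
  then show ?thesis by (simp add: vec_eq_iff)
qed

lemma is_mp_pinv_laplacian:
  assumes inv: "invertible (grounded_laplacian E w v)"
  shows "is_mp_pinv (laplacian E w)
    (centering_matrix ** zero_row_col v (matrix_inv (grounded_laplacian E w v)) ** centering_matrix)"
proof (rule is_mp_pinv_symmetricI)
  let ?Q = "centering_matrix :: real^'n^'n" and ?Z = "zero_row_col v (matrix_inv (grounded_laplacian E w v))"
  have "transpose (matrix_inv (grounded_laplacian E w v)) = matrix_inv (grounded_laplacian E w v)"
    by (rule transpose_matrix_inv_symmetric[OF transpose_grounded_laplacian inv])
  then have "transpose ?Z = ?Z"
    by (simp add: zero_row_col_def transpose_def vec_eq_iff)
  then show "transpose (?Q ** ?Z ** ?Q) = ?Q ** ?Z ** ?Q"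
    by (simp add: matrix_transpose_mul transpose_centering_matrix matrix_mul_assoc)
  have "(\<chi> i j. if i = v then 1 else 0) ** ?Q = 0"
    by (simp add: matrix_matrix_mult_def centering_matrix_def vec_eq_iff mat_def sum_subtractf)
  then show "laplacian E w ** (?Q ** ?Z ** ?Q) = ?Q"
    by (simp add: matrix_mul_assoc laplacian_mult_centering laplacian_mult_zero_row_col[OF inv]
        matrix_diff_rdistrib)
  show "?Q ** (?Q ** ?Z ** ?Q) = ?Q ** ?Z ** ?Q"
    by (simp add: matrix_mul_assoc centering_matrix_idem)
qed (simp_all add: transpose_laplacian transpose_centering_matrix centering_mult_laplacian)

lemma resistance_eq_matrix_inv_grounded:
  assumes inv: "invertible (grounded_laplacian E w v)" and "u \<noteq> v"
  shows "resistance E w u v = matrix_inv (grounded_laplacian E w v) $ u $ u"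
proof -
  let ?z = "ground v (matrix_inv (grounded_laplacian E w v) *v axis u 1)"
  have "resistance E w u v = ?z \<bullet> bvec u v"
    unfolding resistance_def mp_pinv_eqI[OF is_mp_pinv_laplacian[OF inv]]
    by (rule inner_mp_pinv_image[OF transpose_laplacian is_mp_pinv_laplacian[OF inv]
          laplacian_ground_inverse_column[OF inv \<open>u \<noteq> v\<close>]])
  then show ?thesis
    using \<open>u \<noteq> v\<close> by (simp add: bvec_def inner_diff_right inner_axis matrix_vector_mult_basis column_def)
qed

lemma node_resistance_eq_sum_matrix_inv_grounded:
  assumes inv: "invertible (grounded_laplacian E w v)"
  shows "node_resistance E w v = (\<Sum>u\<in>-{v}. matrix_inv (grounded_laplacian E w v) $ u $ u)"
proof -
  have "node_resistance E w v = resistance E w v v + (\<Sum>u\<in>-{v}. resistance E w u v)"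
    by (simp add: node_resistance_def sum.remove[of UNIV v] Compl_eq_Diff_UNIV)
  also have "resistance E w v v = 0"
    by (simp add: resistance_def bvec_def)
  finally show ?thesis
    using resistance_eq_matrix_inv_grounded[OF inv] by simp
qed

subsection \<open>Supermodularity\<close>

lemma diminishing_returns_of_pairwise:
  fixes F :: "'a set \<Rightarrow> real"
  assumes pairwise: "\<And>X x y. X \<subseteq> A \<Longrightarrow> x \<in> A - X \<Longrightarrow> y \<in> A - X \<Longrightarrow> x \<noteq> y \<Longrightarrow>
      F (insert y X) - F (insert x (insert y X)) \<le> F X - F (insert x X)"
    and "finite T" "S \<subseteq> T" "T \<subseteq> A" "x \<in> A - T"
  shows "F T - F (insert x T) \<le> F S - F (insert x S)"
proof -
  have "F (S \<union> U) - F (insert x (S \<union> U)) \<le> F S - F (insert x S)"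
    if "finite U" "U \<subseteq> A" "x \<notin> U" for U
    using that
  proof (induction U rule: finite_induct)
    case empty
    then show ?case by simp
  next
    case (insert y U)
    show ?case
    proof (cases "y \<in> S")
      case True
      then show ?thesis using insert by (simp add: insert_absorb)
    next
      case False
      have "F (insert y (S \<union> U)) - F (insert x (insert y (S \<union> U))) \<le> F (S \<union> U) - F (insert x (S \<union> U))"
        using insert assms(3-5) False by (intro pairwise) auto
      then show ?thesis using insert by simp
    qed
  qed
  from this[of T] assms(2-5) show ?thesis
    by (simp add: Un_absorb1)
qed

lemma connected_graph_mono:
  assumes "connected_graph E" and "E \<subseteq> F"
  shows "connected_graph F"
proof -
  have "{(a, b). {a, b} \<in> E}\<^sup>* \<subseteq> {(a, b). {a, b} \<in> F}\<^sup>*"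
    using assms(2) by (intro rtrancl_mono) auto
  with assms(1) show ?thesis
    unfolding connected_graph_def by blast
qed

lemma node_resistance_spokes_supermodular:
  fixes E :: "'n::finite set set"
  assumes wpos: "\<forall>g\<in>E. w g > 0" and conn: "connected_graph E"
    and e: "e = {a, v}" "a \<noteq> v" "e \<notin> E" "w e > 0"
    and f: "f = {b, v}" "b \<noteq> v" "f \<notin> E" "w f > 0"
    and "e \<noteq> f"
  shows "node_resistance (insert f E) w v - node_resistance (insert e (insert f E)) w v
    \<le> node_resistance E w v - node_resistance (insert e E) w v"
proof -
  let ?M = "\<lambda>F. grounded_laplacian F w v" and ?Pe = "spoke_matrix v w e"
    and ?Pf = "spoke_matrix v w f"
  have grounded: "invertible (?M F)" "nonneg_matrix (matrix_inv (?M F))"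
    "node_resistance F w v = (\<Sum>u\<in>-{v}. matrix_inv (?M F) $ u $ u)"
    if "E \<subseteq> F" "F \<subseteq> insert e (insert f E)" for F
  proof -
    have "\<forall>g\<in>F. w g > 0" using that(2) wpos e(4) f(4) by auto
    with that(1) show "invertible (?M F)" "nonneg_matrix (matrix_inv (?M F))"
      "node_resistance F w v = (\<Sum>u\<in>-{v}. matrix_inv (?M F) $ u $ u)"
      using connected_graph_mono[OF conn]
      by (simp_all add: invertible_grounded_laplacian nonneg_matrix_inv_grounded_laplacian
          node_resistance_eq_sum_matrix_inv_grounded)
  qed
  have Me: "?M (insert e E) = ?M E + ?Pe"
    by (rule grounded_laplacian_insert_spoke[OF e(1-3)])
  have Mf: "?M (insert f E) = ?M E + ?Pf"
    by (rule grounded_laplacian_insert_spoke[OF f(1-3)])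
  have Mfe: "?M (insert e (insert f E)) = ?M E + ?Pf + ?Pe"
    using grounded_laplacian_insert_spoke[OF e(1,2), of "insert f E"] e(3) \<open>e \<noteq> f\<close>
    by (simp add: Mf)
  have spokes_nonneg: "nonneg_matrix ?Pe" "nonneg_matrix ?Pf"
    using e(4) f(4) by (auto simp: nonneg_matrix_def spoke_matrix_def)
  have "nonneg_matrix (matrix_inv (?M E) - matrix_inv (?M E + ?Pf) - matrix_inv (?M E + ?Pe)
      + matrix_inv (?M E + ?Pf + ?Pe))"
    using grounded[of E] grounded[of "insert e E"] grounded[of "insert f E"]
      grounded[of "insert e (insert f E)"] spokes_nonneg
    unfolding Me Mf Mfe by (intro nonneg_matrix_inv_second_difference) auto
  then have "0 \<le> (\<Sum>u\<in>-{v}. (matrix_inv (?M E) - matrix_inv (?M (insert f E))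
      - matrix_inv (?M (insert e E)) + matrix_inv (?M (insert e (insert f E)))) $ u $ u)"
    unfolding Me Mf Mfe by (simp add: nonneg_matrix_def sum_nonneg)
  then show ?thesis
    by (simp add: grounded subset_insertI2 sum.distrib sum_subtractf)
qed

theorem theorem2:
  fixes E Ev S T :: "'n::finite set set" and w :: "'n set \<Rightarrow> real" and v :: 'n and e :: "'n set"
  assumes edges: "\<forall>f\<in>E. \<exists>x y. x \<noteq> y \<and> f = {x, y}"
    and wpos: "\<forall>f\<in>E. w f > 0"
    and conn: "connected_graph E"
    and Ev: "\<forall>f\<in>Ev. \<exists>u. u \<noteq> v \<and> f = {u, v} \<and> f \<notin> E"
    and wEv: "\<forall>f\<in>Ev. w f > 0"
    and ST: "S \<subseteq> T" and TEv: "T \<subseteq> Ev"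
    and e: "e \<in> Ev - T"
  shows "node_resistance (E \<union> T) w v - node_resistance (E \<union> (T \<union> {e})) w v
           \<le> node_resistance (E \<union> S) w v - node_resistance (E \<union> (S \<union> {e})) w v"
proof -
  have "node_resistance (E \<union> insert y X) w v - node_resistance (E \<union> insert x (insert y X)) w v
      \<le> node_resistance (E \<union> X) w v - node_resistance (E \<union> insert x X) w v"
    if X: "X \<subseteq> Ev" and x: "x \<in> Ev - X" and y: "y \<in> Ev - X" and "x \<noteq> y" for X x y
  proof -
    obtain a where "x = {a, v}" "a \<noteq> v" "x \<notin> E"
      using Ev x by blast
    moreover obtain b where "y = {b, v}" "b \<noteq> v" "y \<notin> E"
      using Ev y by blast
    moreover have "\<forall>g\<in>E \<union> X. w g > 0" "connected_graph (E \<union> X)"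
      using wpos wEv X connected_graph_mono[OF conn] by auto
    ultimately show ?thesis
      using node_resistance_spokes_supermodular[of "E \<union> X" w x a v y b] wEv x y \<open>x \<noteq> y\<close>
      by simp
  qed
  from diminishing_returns_of_pairwise[where F = "\<lambda>X. node_resistance (E \<union> X) w v",
      OF this finite ST TEv e]
  show ?thesis by simp
qed

end
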